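(* Let $L$ be a subspace of $\bigwedge^{k}V$ and let $I\subseteq[n]$. Suppose $N_{j\to i}L=L$ for all $i<j$ with $i,j\in I$. Then for each $x\in\bigwedge V^{(I)}$, the family of variable sets of those monomials $y\in\bigwedge V^{([n]\setminus I)}$ with $x\wedge y\in L$ is a shifted set system (with respect to $I$).
   Context: $\mathbb{F}$ is a field (assumed throughout the paper, for expository purposes, to have characteristic not $2$), $V$ is an $n$-dimensional $\mathbb{F}$-vector space with a fixed basis $e_1,\dots,e_n$, and $\bigwedge V$ its exterior algebra; for $S=\{s_1<\cdots<s_r\}\subseteq[n]$, the monomial $e_S=e_{s_1}\wedge\cdots\wedge e_{s_r}$ has variable set $S$, and the monomials with $|S|=k$ form a basis of $\bigwedge^kV$. For $J\subseteq[n]$, $V^{(J)}$ is the span of $\{e_h:h\notin J\}$ (so $V^{([n]\setminus I)}$ is spanned by $\{e_h:h\in I\}$), $V^{(j)}=V^{(\{j\})}$, and $\bigwedge V^{(J)}$ is viewed as a subalgebra of $\bigwedge V$. Slow shift: for distinct $i,j\in[n]$ and nonzero $m\in\bigwedge^kV$, write uniquely $m=x'+e_j\wedge y'$ with $x'\in\bigwedge^kV^{(j)}$, $y'\in\bigwedge^{k-1}V^{(j)}$, and set $N_{j\to i}m=x'+e_i\wedge y'$ if this is nonzero, and $N_{j\to i}m=e_j\wedge y'$ otherwise (the limit as $t\to0$ of the projective action of $e_j\mapsto e_i+te_j$, fixing the other $e_h$). For a subspace $L$, $N_{j\to i}L$ is the span of $\{N_{j\to i}m:m\in L\setminus\{0\}\}$.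 A family $\mathcal{F}$ of subsets of $I$ is shifted (with respect to $I$) if for all $i<j$ in $I$ and every $F\in\mathcal{F}$ with $j\in F$, $i\notin F$, also $(F\setminus\{j\})\cup\{i\}\in\mathcal{F}$. *)

theory Defs
  imports Main
begin

text \<open>An element of the exterior algebra is represented by its coefficient function
on variable sets: f S is the coefficient of the monomial e_S.\<close>

definition ext_alg :: "nat \<Rightarrow> (nat set \<Rightarrow> 'a::field) set" where
  "ext_alg n = {f. \<forall>S. f S \<noteq> 0 \<longrightarrow> S \<subseteq> {1..n}}"

definition ext_deg :: "nat \<Rightarrow> nat \<Rightarrow> (nat set \<Rightarrow> 'a::field) set" where
  "ext_deg n k = {f \<in> ext_alg n. \<forall>S. f S \<noteq> 0 \<longrightarrow> card S = k}"

text \<open>The subalgebra generated by the e_h with h in [n] not in J (i.e. of V^(J)).\<close>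
definition ext_sub :: "nat \<Rightarrow> nat set \<Rightarrow> (nat set \<Rightarrow> 'a::field) set" where
  "ext_sub n J = {f. \<forall>S. f S \<noteq> 0 \<longrightarrow> S \<subseteq> {1..n} - J}"

definition monom :: "nat set \<Rightarrow> (nat set \<Rightarrow> 'a::field)" where
  "monom S = (\<lambda>T. if T = S then 1 else 0)"

text \<open>Sign of e_S wedge e_T = sign * e_(S union T) for disjoint S, T.\<close>
definition wsign :: "nat set \<Rightarrow> nat set \<Rightarrow> 'a::field" where
  "wsign S T = (-1) ^ card {(s, t). s \<in> S \<and> t \<in> T \<and> t < s}"

definition wedge :: "(nat set \<Rightarrow> 'a::field) \<Rightarrow> (nat set \<Rightarrow> 'a) \<Rightarrow> (nat set \<Rightarrow> 'a)" where
  "wedge x y = (\<lambda>U. \<Sum>S\<in>{S. S \<subseteq> U}. wsign S (U - S) * x S * y (U - S))"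

definition is_subspace :: "(nat set \<Rightarrow> 'a::field) set \<Rightarrow> bool" where
  "is_subspace L \<longleftrightarrow> (\<lambda>S. 0) \<in> L \<and> (\<forall>x\<in>L. \<forall>y\<in>L. (\<lambda>S. x S + y S) \<in> L) \<and> (\<forall>c. \<forall>x\<in>L. (\<lambda>S. c * x S) \<in> L)"

definition lin_span :: "(nat set \<Rightarrow> 'a::field) set \<Rightarrow> (nat set \<Rightarrow> 'a) set" where
  "lin_span M = {v. \<exists>A c. finite A \<and> A \<subseteq> M \<and> v = (\<lambda>S. \<Sum>m\<in>A. c m * m S)}"

text \<open>Slow shift N_{j->i} of an element m: m = x' + e_j wedge y' with x', y' free of e_j.\<close>
definition slow_shift :: "nat \<Rightarrow> nat \<Rightarrow> (nat set \<Rightarrow> 'a::field) \<Rightarrow> (nat set \<Rightarrow> 'a)" where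
  "slow_shift j i m =
     (let x' = (\<lambda>S. if j \<in> S then 0 else m S);
          y' = (\<lambda>T. if j \<in> T then 0 else wsign {j} T * m (insert j T));
          r = (\<lambda>S. x' S + wedge (monom {i}) y' S)
      in if r \<noteq> (\<lambda>S. 0) then r else wedge (monom {j}) y')"

definition slow_shift_space :: "nat \<Rightarrow> nat \<Rightarrow> (nat set \<Rightarrow> 'a::field) set \<Rightarrow> (nat set \<Rightarrow> 'a) set" where
  "slow_shift_space j i L = lin_span {slow_shift j i m | m. m \<in> L \<and> m \<noteq> (\<lambda>S. 0)}"

definition shifted_wrt :: "nat set \<Rightarrow> nat set set \<Rightarrow> bool" where
  "shifted_wrt I F \<longleftrightarrow> (\<forall>i\<in>I. \<forall>j\<in>I. i < j \<longrightarrow>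
      (\<forall>A\<in>F. j \<in> A \<longrightarrow> i \<notin> A \<longrightarrow> insert i (A - {j}) \<in> F))"

end

(* Since x avoids the variables
   of I, every monomial of m = x \<and> e_T contains e_j, so in m = x' + e_j \<and> y' the part x'
   vanishes and substituting e_i for e_j gives e_i \<and> y' = \<plusminus>x \<and> e_T' with
   T' = T - {j} + {i}. If this is zero then x \<and> e_T' = 0 \<in> L; otherwise it is the slow
   shift of m, hence lies in N_{j\<rightarrow>i} L = L. *)

theory Submission imports Defs begin

definition pair_sign :: "nat \<Rightarrow> nat \<Rightarrow> 'a::field" where
  "pair_sign s t = (if t < s then -1 else 1)"

lemma wsign_eq_prod:
  assumes "finite S" "finite T"
  shows "(wsign S T :: 'a::field) = (\<Prod>s\<in>S. \<Prod>t\<in>T. pair_sign s t)"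
proof -
  have inv: "{(s, t). s \<in> S \<and> t \<in> T \<and> t < s} = {p \<in> S \<times> T. snd p < fst p}" by auto
  have "(wsign S T :: 'a) = (\<Prod>p\<in>{p \<in> S \<times> T. snd p < fst p}. -1)"
    unfolding wsign_def inv by simp
  also have "\<dots> = (\<Prod>p\<in>S \<times> T. if snd p < fst p then -1 else 1)"
    using prod.inter_filter[of "S \<times> T" "\<lambda>_. -1 :: 'a" "\<lambda>p. snd p < fst p"] assms by simp
  also have "\<dots> = (\<Prod>(s, t)\<in>S \<times> T. pair_sign s t)"
    by (rule prod.cong) (auto simp: pair_sign_def)
  finally show ?thesis by (simp add: prod.cartesian_product)
qed

text \<open>The correction factor \<open>wsign {i} R * wsign {j} R\<close> does not depend on \<open>S\<close>.\<close>

lemma wsign_insert_exchange: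
  assumes "finite S" "finite R" "S \<inter> R = {}" "i \<notin> S" "j \<notin> S" "i \<notin> R" "j \<notin> R" "i \<noteq> j"
  shows "(wsign S (insert i R) :: 'a::field) =
    wsign {i} R * wsign {j} R * wsign {i} (S \<union> R) * wsign {j} (S \<union> R) * wsign S (insert j R)"
proof -
  let ?sg = "pair_sign :: nat \<Rightarrow> nat \<Rightarrow> 'a"
  define P where "P = (\<Prod>s\<in>S. \<Prod>t\<in>R. ?sg s t)"
  have across: "(\<Prod>s\<in>S. ?sg s i) = (\<Prod>s\<in>S. ?sg i s) * (\<Prod>s\<in>S. ?sg j s) * (\<Prod>s\<in>S. ?sg s j)"
  proof -
    have "(\<Prod>s\<in>S. ?sg s i) = (\<Prod>s\<in>S. ?sg i s * ?sg j s * ?sg s j)"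
      using assms by (intro prod.cong) (auto simp: pair_sign_def)
    thus ?thesis by (simp add: prod.distrib)
  qed
  have square: "(\<Prod>t\<in>R. ?sg i t) * (\<Prod>t\<in>R. ?sg j t) * ((\<Prod>t\<in>R. ?sg i t) * (\<Prod>t\<in>R. ?sg j t)) = 1"
  proof -
    have "(\<Prod>t\<in>R. ?sg i t) * (\<Prod>t\<in>R. ?sg j t) * ((\<Prod>t\<in>R. ?sg i t) * (\<Prod>t\<in>R. ?sg j t))
        = (\<Prod>t\<in>R. (?sg i t * ?sg j t) * (?sg i t * ?sg j t))"
      by (simp add: prod.distrib)
    also have "\<dots> = 1" by (intro prod.neutral) (auto simp: pair_sign_def)
    finally show ?thesis .
  qed
  have "(wsign S (insert i R) :: 'a) = (\<Prod>s\<in>S. ?sg s i) * P"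
    and "(wsign S (insert j R) :: 'a) = (\<Prod>s\<in>S. ?sg s j) * P"
    and "(wsign {i} (S \<union> R) :: 'a) = (\<Prod>s\<in>S. ?sg i s) * (\<Prod>t\<in>R. ?sg i t)"
    and "(wsign {j} (S \<union> R) :: 'a) = (\<Prod>s\<in>S. ?sg j s) * (\<Prod>t\<in>R. ?sg j t)"
    and "(wsign {i} R :: 'a) = (\<Prod>t\<in>R. ?sg i t)" and "(wsign {j} R :: 'a) = (\<Prod>t\<in>R. ?sg j t)"
    using assms by (simp_all add: wsign_eq_prod P_def prod.distrib prod.union_disjoint)
  then show ?thesis using across square by (simp add: algebra_simps)
qed

lemma wedge_infinite: "infinite U \<Longrightarrow> wedge x y U = 0"
  by (simp add: wedge_def Pow_def[symmetric])

lemma wedge_monom_right: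
  "wedge x (monom T) U = (if finite U \<and> T \<subseteq> U then wsign (U - T) T * x (U - T) else 0)"
proof (cases "finite U")
  case True
  have "wedge x (monom T) U =
      (\<Sum>S\<in>{S. S \<subseteq> U}. if S = U - T then (if T \<subseteq> U then wsign S (U - S) * x S else 0) else 0)"
    unfolding wedge_def monom_def by (rule sum.cong) auto
  then show ?thesis using True by (simp add: double_diff)
qed (simp add: wedge_infinite)

lemma wedge_monom_left:
  "wedge (monom S) y U = (if finite U \<and> S \<subseteq> U then wsign S (U - S) * y (U - S) else 0)"
proof (cases "finite U")
  case True
  have "wedge (monom S) y U =
      (\<Sum>S'\<in>{S'. S' \<subseteq> U}. if S' = S then (if S \<subseteq> U then wsign S (U - S) * y (U - S) else 0) else 0)"
    unfolding wedge_def monom_def by (rule sum.cong) auto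
  then show ?thesis using True by simp
qed (simp add: wedge_infinite)

lemma monom_in_ext_sub: "(monom T :: nat set \<Rightarrow> 'a::field) \<in> ext_sub n J \<longleftrightarrow> T \<subseteq> {1..n} - J"
  by (simp add: ext_sub_def monom_def)

text \<open>The substitution \<open>e\<^sub>j \<mapsto> e\<^sub>i\<close>, i.e. \<open>x' + e\<^sub>i \<and> y'\<close> for \<open>m = x' + e\<^sub>j \<and> y'\<close>.\<close>

definition var_subst :: "nat \<Rightarrow> nat \<Rightarrow> (nat set \<Rightarrow> 'a::field) \<Rightarrow> (nat set \<Rightarrow> 'a)" where
  "var_subst j i m = (\<lambda>S. (if j \<in> S then 0 else m S) +
     wedge (monom {i}) (\<lambda>T. if j \<in> T then 0 else wsign {j} T * m (insert j T)) S)"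

lemma slow_shift_eq_var_subst:
  "var_subst j i m \<noteq> (\<lambda>S. 0) \<Longrightarrow> slow_shift j i m = var_subst j i m"
  unfolding slow_shift_def var_subst_def Let_def by simp

lemma var_subst_zero: "var_subst j i (\<lambda>S. 0) = (\<lambda>S. 0)"
  by (auto simp: var_subst_def wedge_monom_left)

lemma var_subst_mem_shift_closed:
  assumes L: "is_subspace L" and closed: "slow_shift_space j i L \<subseteq> L" and m: "m \<in> L"
  shows "var_subst j i m \<in> L"
proof (cases "var_subst j i m = (\<lambda>S. 0)")
  case True
  then show ?thesis using L by (simp add: is_subspace_def)
next
  case False
  then have "m \<noteq> (\<lambda>S. 0)" by (auto simp: var_subst_zero)
  moreover have "var_subst j i m = slow_shift j i m"
    using False by (simp add: slow_shift_eq_var_subst)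
  ultimately have "var_subst j i m \<in> {slow_shift j i m | m. m \<in> L \<and> m \<noteq> (\<lambda>S. 0)}"
    using m by blast
  then have "var_subst j i m \<in> slow_shift_space j i L"
    unfolding slow_shift_space_def lin_span_def
    by (intro CollectI exI[of _ "{var_subst j i m}"] exI[of _ "\<lambda>_. 1"]) auto
  then show ?thesis using closed by blast
qed

lemma var_subst_support_contains:
  assumes "\<And>S. m S \<noteq> 0 \<Longrightarrow> j \<in> S" and "i \<noteq> j"
  shows "var_subst j i m U = (if finite U \<and> i \<in> U \<and> j \<notin> U
    then wsign {i} (U - {i}) * wsign {j} (U - {i}) * m (insert j (U - {i})) else 0)"
  using assms by (auto simp: var_subst_def wedge_monom_left)

lemma var_subst_wedge_monom:
  fixes x :: "nat set \<Rightarrow> 'a::field"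
  assumes x: "\<And>S. x S \<noteq> 0 \<Longrightarrow> i \<notin> S \<and> j \<notin> S"
    and T: "finite T" "j \<in> T" "i \<notin> T" and ij: "i \<noteq> j"
  shows "wedge x (monom (insert i (T - {j}))) =
    (\<lambda>U. wsign {i} (T - {j}) * wsign {j} (T - {j}) * var_subst j i (wedge x (monom T)) U)"
proof
  fix U
  define R where "R = T - {j}"
  define S where "S = U - insert i R"
  have TR: "T = insert j R" "i \<notin> R" "j \<notin> R" "finite R" using T by (auto simp: R_def)
  have subst: "var_subst j i (wedge x (monom T)) U = (if finite U \<and> insert i R \<subseteq> U \<and> j \<notin> U
      then wsign {i} (U - {i}) * wsign {j} (U - {i}) * (wsign S T * x S) else 0)"
  proof -
    have "wedge x (monom T) S' \<noteq> 0 \<Longrightarrow> j \<in> S'" for S'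
      using T by (auto simp: wedge_monom_right split: if_splits)
    then have "var_subst j i (wedge x (monom T)) U = (if finite U \<and> i \<in> U \<and> j \<notin> U
        then wsign {i} (U - {i}) * wsign {j} (U - {i}) * wedge x (monom T) (insert j (U - {i})) else 0)"
      using ij by (rule var_subst_support_contains)
    moreover have "j \<notin> U \<Longrightarrow> insert j (U - {i}) - T = S"
      using TR by (auto simp: S_def)
    moreover have "T \<subseteq> insert j (U - {i}) \<longleftrightarrow> R \<subseteq> U"
      using TR by auto
    ultimately show ?thesis
      using TR by (auto simp: wedge_monom_right)
  qed
  show "wedge x (monom (insert i R)) U =
      wsign {i} R * wsign {j} R * var_subst j i (wedge x (monom T)) U"
  proof (cases "finite U \<and> insert i R \<subseteq> U \<and> x S \<noteq> 0")
    case True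
    then have S: "finite S" "i \<notin> S" "j \<notin> S" "S \<inter> R = {}" using x by (auto simp: S_def)
    have "U = S \<union> insert i R" "U - {i} = S \<union> R" using True TR by (auto simp: S_def)
    then show ?thesis
      using True S TR ij subst wsign_insert_exchange[OF S(1) TR(4) S(4) S(2,3) TR(2,3) ij]
      by (simp add: wedge_monom_right S_def algebra_simps)
  next
    case False
    then show ?thesis by (auto simp: subst wedge_monom_right S_def)
  qed
qed

theorem proposition3p12:
  fixes n k :: nat and I :: "nat set" and L :: "(nat set \<Rightarrow> 'a::field) set"
    and x :: "nat set \<Rightarrow> 'a"
  assumes char: "(2::'a) \<noteq> 0"
    and I: "I \<subseteq> {1..n}"
    and Lsub: "is_subspace L" "L \<subseteq> ext_deg n k"
    and shiftinv: "\<forall>i\<in>I. \<forall>j\<in>I. i < j \<longrightarrow> slow_shift_space j i L = L"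
    and x: "x \<in> ext_sub n I"
  shows "shifted_wrt I {T. monom T \<in> ext_sub n ({1..n} - I) \<and> wedge x (monom T) \<in> L}"
  unfolding shifted_wrt_def
proof (intro ballI impI)
  fix i j T
  assume ij: "i \<in> I" "j \<in> I" "i < j"
    and T: "T \<in> {T. monom T \<in> ext_sub n ({1..n} - I) \<and> wedge x (monom T) \<in> L}"
    and "j \<in> T" "i \<notin> T"
  have "T \<subseteq> I" using T by (auto simp: monom_in_ext_sub)
  then have "finite T" using I finite_subset[of T "{1..n}"] by auto
  have "\<And>S. x S \<noteq> 0 \<Longrightarrow> i \<notin> S \<and> j \<notin> S" using x ij by (auto simp: ext_sub_def)
  then have exchange: "wedge x (monom (insert i (T - {j}))) =
      (\<lambda>U. wsign {i} (T - {j}) * wsign {j} (T - {j}) * var_subst j i (wedge x (monom T)) U)"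
    using \<open>finite T\<close> \<open>j \<in> T\<close> \<open>i \<notin> T\<close> \<open>i < j\<close> by (intro var_subst_wedge_monom) auto
  have "slow_shift_space j i L \<subseteq> L" using shiftinv ij by blast
  moreover have "wedge x (monom T) \<in> L" using T by blast
  ultimately have "var_subst j i (wedge x (monom T)) \<in> L"
    using Lsub(1) by (intro var_subst_mem_shift_closed)
  then have "wedge x (monom (insert i (T - {j}))) \<in> L"
    using Lsub(1) unfolding exchange is_subspace_def by blast
  moreover have "insert i (T - {j}) \<subseteq> I" using \<open>T \<subseteq> I\<close> ij by auto
  ultimately show "insert i (T - {j}) \<in> {T. monom T \<in> ext_sub n ({1..n} - I) \<and> wedge x (monom T) \<in> L}"
    using I by (auto simp: monom_in_ext_sub)
qed

end
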